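(* Let $\Pi$ be a safety problem. If $\Pi$ has a proof in the incremental forward-backward proof system with prophecy $\mathbf{FBPI}$, then $\Pi$ is safe.
   Context: A first-order vocabulary $\Sigma$ consists of constant, function and relation symbols; $\Sigma'=\{a' : a\in\Sigma\}$ is a disjoint copy, and for a formula $\varphi$, $\varphi'$ denotes $\varphi$ with every vocabulary symbol replaced by its primed copy. A state is a first-order structure over the vocabulary. A safety problem over $\Sigma$ is a triple $(\iota,\tau,\beta)$, where $\iota$ (initial states) and $\beta$ (bad states) are closed formulas over $\Sigma$ and $\tau$ (transitions) is a closed formula over $\Sigma\uplus\Sigma'$. A pair of states $(s,t)$ over a common domain is a transition if the structure interpreting unprimed symbols as in $s$ and primed ones as in $t$ satisfies $\tau$. A trace is a finite sequence of states over a common domain whose consecutive states form transitions; the problem is safe if there is no trace $s_0,\dots,s_k$ with $s_0\models\iota$, $s_k\models\beta$. $A\Rightarrow B$ means the implication $A\to B$ is valid; $\tau^{-1}$ is $\tau$ with each symbol and its primed counterpart swapped. Proofs: a proof of $\Pi$ in a system is a finite tree whose nodes are safety problems (possibly over different vocabularies), whose root is $\Pi$, and in which each node together with its children is an instance of one of the system's rules, with side conditions valid. $\mathbf{FBPI}$ has the rules (for a safety problem over vocabulary $\Sigma$, $\varphi$ ranging over closed formulas over $\Sigma$ in the first four): (Ind): no premises; conclusion $(\iota,\tau,\neg\varphi)$; side conditions $\iota\Rightarrow\varphi$ and $\varphi\wedge\tau\Rightarrow\varphi'$. (Cons): premise $(\iota,\tau,\neg\varphi)$; conclusion $(\iota,\tau,\beta)$;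 side condition $\varphi\Rightarrow\neg\beta$. (Inc): premises $(\iota,\tau,\neg\varphi)$ and $(\iota\wedge\varphi,\ \tau\wedge\varphi\wedge\varphi',\ \beta\wedge\varphi)$; conclusion $(\iota,\tau,\beta)$. (Rev): premise $(\beta,\tau^{-1},\iota)$; conclusion $(\iota,\tau,\beta)$. (Proph): for $\Pi=(\iota,\tau,\beta)$ over $\Sigma$, a fresh constant symbol $w$, a fresh unary relation symbol $m$, and a formula $\varphi(x)$ over $\Sigma$ with free variable $x$: premises $\Pi^{\mathrm{sound}}_\varphi$ and $\Pi^w_\varphi$; conclusion $\Pi$. Here $\varphi(w)$ is $\varphi$ with $x$ replaced by $w$, $\Pi^w_\varphi=\big(\iota\wedge\varphi(w),\ \varphi(w)\wedge\tau\wedge w'=w\wedge(\varphi(w))',\ \beta\wedge\varphi(w)\big)$ over $\Sigma\cup\{w\}$, and $\Pi^{\mathrm{sound}}_\varphi=\big(\iota\wedge\forall x.\,\varphi(x)\to m(x),\ \tau\wedge\forall x.\,(m(x)\wedge\varphi(x)\wedge\varphi'(x))\to m'(x),\ \beta\wedge\forall x.\,\varphi(x)\to\neg m(x)\big)$ over $\Sigma\cup\{m\}$. *)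

theory Defs
  imports Main
begin

text \<open>A symbol is a base name together with a flag telling whether it is the
primed copy.  Unprimed symbols of a vocabulary have flag False, their primed
copies flag True.  Constants are function symbols of arity 0.\<close>

type_synonym sym = "nat \<times> bool"

datatype kind = FunK nat | RelK nat

type_synonym vocab = "nat \<Rightarrow> kind option"

datatype trm = Var nat | Fn sym "trm list"

datatype fm =
    FF
  | Eq trm trm
  | Pr sym "trm list"
  | Neg fm
  | Conj fm fm
  | Disj fm fm
  | Imp fm fm
  | All nat fm
  | Ex nat fm

fun fv_trm :: "trm \<Rightarrow> nat set" where
  "fv_trm (Var x) = {x}"
| "fv_trm (Fn f ts) = (\<Union>t\<in>set ts. fv_trm t)"

fun fv :: "fm \<Rightarrow> nat set" where
  "fv FF = {}"
| "fv (Eq s t) = fv_trm s \<union> fv_trm t"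
| "fv (Pr r ts) = (\<Union>t\<in>set ts. fv_trm t)"
| "fv (Neg p) = fv p"
| "fv (Conj p q) = fv p \<union> fv q"
| "fv (Disj p q) = fv p \<union> fv q"
| "fv (Imp p q) = fv p \<union> fv q"
| "fv (All x p) = fv p - {x}"
| "fv (Ex x p) = fv p - {x}"

definition closed :: "fm \<Rightarrow> bool" where
  "closed p \<longleftrightarrow> fv p = {}"

text \<open>Well-formedness over a vocabulary; \<open>ps\<close> is the set of admissible prime
flags: \<open>{False}\<close> for formulas over \<open>\<Sigma>\<close>, \<open>UNIV\<close> for formulas over
\<open>\<Sigma> \<uplus> \<Sigma>'\<close>.\<close>
fun wf_trm :: "vocab \<Rightarrow> bool set \<Rightarrow> trm \<Rightarrow> bool" where
  "wf_trm V ps (Var x) = True"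
| "wf_trm V ps (Fn (n, p) ts) =
     (p \<in> ps \<and> V n = Some (FunK (length ts)) \<and> (\<forall>t\<in>set ts. wf_trm V ps t))"

fun wf_fm :: "vocab \<Rightarrow> bool set \<Rightarrow> fm \<Rightarrow> bool" where
  "wf_fm V ps FF = True"
| "wf_fm V ps (Eq s t) = (wf_trm V ps s \<and> wf_trm V ps t)"
| "wf_fm V ps (Pr (n, p) ts) =
     (p \<in> ps \<and> V n = Some (RelK (length ts)) \<and> (\<forall>t\<in>set ts. wf_trm V ps t))"
| "wf_fm V ps (Neg a) = wf_fm V ps a"
| "wf_fm V ps (Conj a b) = (wf_fm V ps a \<and> wf_fm V ps b)"
| "wf_fm V ps (Disj a b) = (wf_fm V ps a \<and> wf_fm V ps b)"
| "wf_fm V ps (Imp a b) = (wf_fm V ps a \<and> wf_fm V ps b)"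
| "wf_fm V ps (All x a) = wf_fm V ps a"
| "wf_fm V ps (Ex x a) = wf_fm V ps a"

fun ren_trm :: "(sym \<Rightarrow> sym) \<Rightarrow> trm \<Rightarrow> trm" where
  "ren_trm g (Var x) = Var x"
| "ren_trm g (Fn f ts) = Fn (g f) (map (ren_trm g) ts)"

fun ren :: "(sym \<Rightarrow> sym) \<Rightarrow> fm \<Rightarrow> fm" where
  "ren g FF = FF"
| "ren g (Eq s t) = Eq (ren_trm g s) (ren_trm g t)"
| "ren g (Pr r ts) = Pr (g r) (map (ren_trm g) ts)"
| "ren g (Neg a) = Neg (ren g a)"
| "ren g (Conj a b) = Conj (ren g a) (ren g b)"
| "ren g (Disj a b) = Disj (ren g a) (ren g b)"
| "ren g (Imp a b) = Imp (ren g a) (ren g b)"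
| "ren g (All x a) = All x (ren g a)"
| "ren g (Ex x a) = Ex x (ren g a)"

definition prime :: "fm \<Rightarrow> fm" where
  "prime = ren (\<lambda>(n, p). (n, True))"

definition inv :: "fm \<Rightarrow> fm" where
  "inv = ren (\<lambda>(n, p). (n, \<not> p))"

text \<open>Substitution of a (closed) term for the free occurrences of a variable.\<close>
fun subst_trm :: "nat \<Rightarrow> trm \<Rightarrow> trm \<Rightarrow> trm" where
  "subst_trm x u (Var y) = (if y = x then u else Var y)"
| "subst_trm x u (Fn f ts) = Fn f (map (subst_trm x u) ts)"

fun subst :: "nat \<Rightarrow> trm \<Rightarrow> fm \<Rightarrow> fm" where
  "subst x u FF = FF"
| "subst x u (Eq s t) = Eq (subst_trm x u s) (subst_trm x u t)"
| "subst x u (Pr r ts) = Pr r (map (subst_trm x u) ts)"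
| "subst x u (Neg a) = Neg (subst x u a)"
| "subst x u (Conj a b) = Conj (subst x u a) (subst x u b)"
| "subst x u (Disj a b) = Disj (subst x u a) (subst x u b)"
| "subst x u (Imp a b) = Imp (subst x u a) (subst x u b)"
| "subst x u (All y a) = (if y = x then All y a else All y (subst x u a))"
| "subst x u (Ex y a) = (if y = x then Ex y a else Ex y (subst x u a))"

text \<open>A state interprets every symbol name (symbols outside the vocabulary
are irrelevant, since well-formed formulas do not mention them).  The
domain is a nonempty set \<open>D :: 'a set\<close>, given separately, so that a trace
consists of states over a common domain.\<close>
record 'a state =
  sfn :: "nat \<Rightarrow> 'a list \<Rightarrow> 'a"
  srl :: "nat \<Rightarrow> 'a list \<Rightarrow> bool"

definition wf_state :: "'a set \<Rightarrow> 'a state \<Rightarrow> bool" where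
  "wf_state D s \<longleftrightarrow> (\<forall>n as. set as \<subseteq> D \<longrightarrow> sfn s n as \<in> D)"

fun teval :: "(sym \<Rightarrow> 'a list \<Rightarrow> 'a) \<Rightarrow> (nat \<Rightarrow> 'a) \<Rightarrow> trm \<Rightarrow> 'a" where
  "teval F e (Var x) = e x"
| "teval F e (Fn f ts) = F f (map (teval F e) ts)"

fun sat :: "'a set \<Rightarrow> (sym \<Rightarrow> 'a list \<Rightarrow> 'a) \<Rightarrow> (sym \<Rightarrow> 'a list \<Rightarrow> bool)
            \<Rightarrow> (nat \<Rightarrow> 'a) \<Rightarrow> fm \<Rightarrow> bool" where
  "sat D F R e FF = False"
| "sat D F R e (Eq s t) = (teval F e s = teval F e t)"
| "sat D F R e (Pr r ts) = R r (map (teval F e) ts)"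
| "sat D F R e (Neg a) = (\<not> sat D F R e a)"
| "sat D F R e (Conj a b) = (sat D F R e a \<and> sat D F R e b)"
| "sat D F R e (Disj a b) = (sat D F R e a \<or> sat D F R e b)"
| "sat D F R e (Imp a b) = (sat D F R e a \<longrightarrow> sat D F R e b)"
| "sat D F R e (All x a) = (\<forall>d\<in>D. sat D F R (e(x := d)) a)"
| "sat D F R e (Ex x a) = (\<exists>d\<in>D. sat D F R (e(x := d)) a)"

definition jfn :: "'a state \<Rightarrow> 'a state \<Rightarrow> sym \<Rightarrow> 'a list \<Rightarrow> 'a" where
  "jfn s t = (\<lambda>(n, p). if p then sfn t n else sfn s n)"

definition jrl :: "'a state \<Rightarrow> 'a state \<Rightarrow> sym \<Rightarrow> 'a list \<Rightarrow> bool" where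
  "jrl s t = (\<lambda>(n, p). if p then srl t n else srl s n)"

text \<open>Satisfaction of a formula by a pair of states (for closed formulas the
environment is irrelevant); a single state \<open>s\<close> satisfies a formula over
\<open>\<Sigma>\<close> iff the pair \<open>(s, s)\<close> does.\<close>
definition sat2 :: "'a set \<Rightarrow> 'a state \<Rightarrow> 'a state \<Rightarrow> fm \<Rightarrow> bool" where
  "sat2 D s t p \<longleftrightarrow> (\<forall>e. (\<forall>x. e x \<in> D) \<longrightarrow> sat D (jfn s t) (jrl s t) e p)"

definition sat1 :: "'a set \<Rightarrow> 'a state \<Rightarrow> fm \<Rightarrow> bool" where
  "sat1 D s p \<longleftrightarrow> sat2 D s s p"

definition valid :: "'a itself \<Rightarrow> fm \<Rightarrow> bool" where
  "valid T p \<longleftrightarrow> (\<forall>(D :: 'a set) s t. D \<noteq> {} \<longrightarrow> wf_state D s \<longrightarrow> wf_state D t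
                     \<longrightarrow> sat2 D s t p)"

text \<open>A safety problem together with its vocabulary: \<open>(\<Sigma>, \<iota>, \<tau>, \<beta>)\<close>.\<close>
type_synonym problem = "vocab \<times> fm \<times> fm \<times> fm"

definition closed_over :: "vocab \<Rightarrow> fm \<Rightarrow> bool" where
  "closed_over V p \<longleftrightarrow> closed p \<and> wf_fm V {False} p"

definition closed_over2 :: "vocab \<Rightarrow> fm \<Rightarrow> bool" where
  "closed_over2 V p \<longleftrightarrow> closed p \<and> wf_fm V UNIV p"

fun wf_problem :: "problem \<Rightarrow> bool" where
  "wf_problem (V, i, tr, b) \<longleftrightarrow> closed_over V i \<and> closed_over2 V tr \<and> closed_over V b"

definition is_trace :: "'a set \<Rightarrow> fm \<Rightarrow> 'a state list \<Rightarrow> bool" where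
  "is_trace D tr ss \<longleftrightarrow> D \<noteq> {} \<and> (\<forall>s\<in>set ss. wf_state D s)
     \<and> (\<forall>i. Suc i < length ss \<longrightarrow> sat2 D (ss ! i) (ss ! Suc i) tr)"

fun safe :: "'a itself \<Rightarrow> problem \<Rightarrow> bool" where
  "safe T (V, i, tr, b) \<longleftrightarrow>
     \<not> (\<exists>(D :: 'a set) ss. ss \<noteq> [] \<and> is_trace D tr ss
            \<and> sat1 D (hd ss) i \<and> sat1 D (last ss) b)"

definition implies :: "'a itself \<Rightarrow> fm \<Rightarrow> fm \<Rightarrow> bool" where
  "implies T a b \<longleftrightarrow> valid T (Imp a b)"

text \<open>\<open>\<Pi>\<^sup>w\<^sub>\<phi>\<close> and \<open>\<Pi>\<^sup>s\<^sup>o\<^sup>u\<^sup>n\<^sup>d\<^sub>\<phi>\<close> for the prophecy rule; \<open>x\<close> is the free variable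
of \<open>\<phi>\<close>, \<open>w\<close> the name of the fresh constant, \<open>m\<close> the name of the fresh unary
relation.\<close>
fun proph_w :: "problem \<Rightarrow> nat \<Rightarrow> fm \<Rightarrow> nat \<Rightarrow> problem" where
  "proph_w (V, i, tr, b) x phi w =
     (let cw = Fn (w, False) []; cw' = Fn (w, True) []; pw = subst x cw phi in
      (V(w \<mapsto> FunK 0),
       Conj i pw,
       Conj pw (Conj tr (Conj (Eq cw' cw) (prime pw))),
       Conj b pw))"

fun proph_sound :: "problem \<Rightarrow> nat \<Rightarrow> fm \<Rightarrow> nat \<Rightarrow> problem" where
  "proph_sound (V, i, tr, b) x phi m =
     (V(m \<mapsto> RelK 1),
      Conj i (All x (Imp phi (Pr (m, False) [Var x]))),
      Conj tr (All x (Imp (Conj (Pr (m, False) [Var x]) (Conj phi (prime phi)))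
                          (Pr (m, True) [Var x]))),
      Conj b (All x (Imp phi (Neg (Pr (m, False) [Var x])))))"

fun rule_inst :: "'a itself \<Rightarrow> problem \<Rightarrow> problem list \<Rightarrow> bool" where
  "rule_inst T (V, i, tr, b) cs \<longleftrightarrow>
     \<comment> \<open>(Ind)\<close>
     (\<exists>phi. closed_over V phi \<and> cs = [] \<and> b = Neg phi
        \<and> implies T i phi \<and> implies T (Conj phi tr) (prime phi))
   \<or> \<comment> \<open>(Cons)\<close>
     (\<exists>phi. closed_over V phi \<and> cs = [(V, i, tr, Neg phi)] \<and> implies T phi (Neg b))
   \<or> \<comment> \<open>(Inc)\<close>
     (\<exists>phi. closed_over V phi \<and>
        cs = [(V, i, tr, Neg phi),
              (V, Conj i phi, Conj tr (Conj phi (prime phi)), Conj b phi)])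
   \<or> \<comment> \<open>(Rev)\<close>
     (cs = [(V, b, inv tr, i)])
   \<or> \<comment> \<open>(Proph)\<close>
     (\<exists>w m x phi. V w = None \<and> V m = None \<and> wf_fm V {False} phi \<and> fv phi \<subseteq> {x}
        \<and> cs = [proph_sound (V, i, tr, b) x phi m, proph_w (V, i, tr, b) x phi w])"

datatype ptree = Node problem "ptree list"

fun root :: "ptree \<Rightarrow> problem" where
  "root (Node p cs) = p"

fun is_proof :: "'a itself \<Rightarrow> ptree \<Rightarrow> bool" where
  "is_proof T (Node p cs) \<longleftrightarrow>
     wf_problem p \<and> rule_inst T p (map root cs) \<and> (\<forall>c\<in>set cs. is_proof T c)"

definition has_fbpi_proof :: "'a itself \<Rightarrow> problem \<Rightarrow> bool" where
  "has_fbpi_proof T p \<longleftrightarrow> (\<exists>P. is_proof T P \<and> root P = p)"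

end

theory Submission
  imports Defs
begin

(* Every rule of FBPI is sound: an error trace (a trace from the initial to the bad states)
   of the conclusion yields one of some premise, and (Ind) admits none, since the inductive
   invariant holds along every trace.  For (Cons) the trace itself serves, for (Rev) its
   reversal.  For (Inc) either the trace leaves phi, and its prefix up to that point is an
   error trace of (iota, tau, not phi), or it stays inside phi.  For (Proph) either some d
   satisfies phi(d) in every state of the trace, and interpreting w by d gives an error trace
   of the w-premise, or every d violates phi somewhere, and interpreting m at step j by the
   set of those d for which phi(d) held at all steps up to j gives one of the soundness
   premise. *)

lemma teval_symbol_cong:
  "wf_trm V ps t \<Longrightarrow> (\<And>n q. V n \<noteq> None \<Longrightarrow> q \<in> ps \<Longrightarrow> F (n, q) = F' (n, q))
   \<Longrightarrow> teval F e t = teval F' e t"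
  by (induction V ps t rule: wf_trm.induct) (auto cong: map_cong)

lemma sat_symbol_cong:
  "wf_fm V ps p \<Longrightarrow>
   (\<And>n q. V n \<noteq> None \<Longrightarrow> q \<in> ps \<Longrightarrow> F (n, q) = F' (n, q) \<and> R (n, q) = R' (n, q))
   \<Longrightarrow> sat D F R e p = sat D F' R' e p"
proof (induction V ps p arbitrary: e rule: wf_fm.induct)
  case (2 V ps s t)
  then show ?case using teval_symbol_cong[of V ps _ F F' e] by auto
next
  case (3 V ps n p ts)
  then show ?case using teval_symbol_cong[of V ps _ F F' e] by (auto cong: map_cong)
qed auto

lemma teval_env_cong: "\<forall>x\<in>fv_trm t. e x = e' x \<Longrightarrow> teval F e t = teval F e' t"
proof (induction t)
  case (Fn f ts)
  then have "map (teval F e) ts = map (teval F e') ts" by (auto intro!: map_cong)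
  then show ?case by (simp only: teval.simps)
qed simp

lemma sat_env_cong: "\<forall>x\<in>fv p. e x = e' x \<Longrightarrow> sat D F R e p = sat D F R e' p"
proof (induction p arbitrary: e e')
  case (Eq s t)
  then show ?case using teval_env_cong[of s e e' F] teval_env_cong[of t e e' F] by auto
next
  case (Pr r ts)
  then have "map (teval F e) ts = map (teval F e') ts"
    using teval_env_cong[of _ e e' F] by simp
  then show ?case by (simp only: sat.simps)
next
  case (All x a)
  have "sat D F R (e(x := d)) a = sat D F R (e'(x := d)) a" for d
    by (rule All.IH) (use All.prems in auto)
  then show ?case by (simp only: sat.simps)
next
  case (Ex x a)
  have "sat D F R (e(x := d)) a = sat D F R (e'(x := d)) a" for d
    by (rule Ex.IH) (use Ex.prems in auto)
  then show ?case by (simp only: sat.simps)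
next
  case (Conj p1 p2)
  have "sat D F R e p1 = sat D F R e' p1" by (rule Conj.IH(1)) (use Conj.prems in auto)
  moreover have "sat D F R e p2 = sat D F R e' p2" by (rule Conj.IH(2)) (use Conj.prems in auto)
  ultimately show ?case by (simp only: sat.simps)
next
  case (Disj p1 p2)
  have "sat D F R e p1 = sat D F R e' p1" by (rule Disj.IH(1)) (use Disj.prems in auto)
  moreover have "sat D F R e p2 = sat D F R e' p2" by (rule Disj.IH(2)) (use Disj.prems in auto)
  ultimately show ?case by (simp only: sat.simps)
next
  case (Imp p1 p2)
  have "sat D F R e p1 = sat D F R e' p1" by (rule Imp.IH(1)) (use Imp.prems in auto)
  moreover have "sat D F R e p2 = sat D F R e' p2" by (rule Imp.IH(2)) (use Imp.prems in auto)
  ultimately show ?case by (simp only: sat.simps)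
qed simp_all

lemma teval_ren: "teval F e (ren_trm g t) = teval (\<lambda>a. F (g a)) e t"
proof (induction t)
  case (Fn f ts)
  have "map (\<lambda>t. teval F e (ren_trm g t)) ts = map (teval (\<lambda>a. F (g a)) e) ts"
    by (rule map_cong[OF refl]) (rule Fn.IH)
  then show ?case by (simp only: teval.simps ren_trm.simps map_map comp_def)
qed simp

lemma sat_ren: "sat D F R e (ren g p) = sat D (\<lambda>a. F (g a)) (\<lambda>a. R (g a)) e p"
proof (induction p arbitrary: e)
  case (Pr r ts)
  have "map (\<lambda>t. teval F e (ren_trm g t)) ts = map (teval (\<lambda>a. F (g a)) e) ts"
    by (rule map_cong[OF refl]) (rule teval_ren)
  then show ?case by (simp only: sat.simps ren.simps map_map comp_def)
qed (auto simp: teval_ren)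

lemma teval_subst:
  "fv_trm u = {} \<Longrightarrow> teval F e (subst_trm x u t) = teval F (e(x := teval F e u)) t"
proof (induction t)
  case (Fn f ts)
  have "map (\<lambda>t. teval F e (subst_trm x u t)) ts = map (teval F (e(x := teval F e u))) ts"
    by (rule map_cong[OF refl]) (rule Fn.IH, assumption, rule Fn.prems)
  then show ?case by (simp only: teval.simps subst_trm.simps map_map comp_def)
qed simp

lemma sat_subst:
  "fv_trm u = {} \<Longrightarrow> sat D F R e (subst x u p) = sat D F R (e(x := teval F e u)) p"
proof (induction p arbitrary: e)
  case (Pr r ts)
  have "map (\<lambda>t. teval F e (subst_trm x u t)) ts = map (teval F (e(x := teval F e u))) ts"
    by (rule map_cong[OF refl]) (rule teval_subst, rule Pr.prems)
  then show ?case by (simp only: sat.simps subst.simps map_map comp_def)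
next
  case (All y a)
  have "sat D F R (e(y := d)) (subst x u a) = sat D F R (e(x := teval F e u, y := d)) a"
    if "y \<noteq> x" for d
  proof -
    have "teval F (e(y := d)) u = teval F e u"
      using teval_env_cong All.prems by blast
    then have "(e(y := d))(x := teval F (e(y := d)) u) = e(x := teval F e u, y := d)"
      using that by (intro ext) simp
    then show ?thesis by (simp only: All.IH[OF All.prems])
  qed
  then show ?case
    by (cases "y = x") (simp_all only: sat.simps subst.simps if_True if_False fun_upd_upd simp_thms)
next
  case (Ex y a)
  have "sat D F R (e(y := d)) (subst x u a) = sat D F R (e(x := teval F e u, y := d)) a"
    if "y \<noteq> x" for d
  proof -
    have "teval F (e(y := d)) u = teval F e u"
      using teval_env_cong Ex.prems by blast
    then have "(e(y := d))(x := teval F (e(y := d)) u) = e(x := teval F e u, y := d)"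
      using that by (intro ext) simp
    then show ?thesis by (simp only: Ex.IH[OF Ex.prems])
  qed
  then show ?case
    by (cases "y = x") (simp_all only: sat.simps subst.simps if_True if_False fun_upd_upd simp_thms)
qed (auto simp: teval_subst)

lemma all_env_const:
  assumes "D \<noteq> {}"
  shows "(\<forall>e. (\<forall>x. e x \<in> D) \<longrightarrow> P) \<longleftrightarrow> P"
proof -
  obtain d where "d \<in> D" using assms by blast
  then show ?thesis by (auto dest: spec[of _ "\<lambda>_. d"])
qed

lemma sat2_Conj: "sat2 D s t (Conj a b) \<longleftrightarrow> sat2 D s t a \<and> sat2 D s t b"
  by (auto simp: sat2_def)

lemma sat1_Conj: "sat1 D s (Conj a b) \<longleftrightarrow> sat1 D s a \<and> sat1 D s b"
  by (simp add: sat1_def sat2_Conj)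

lemma sat_unprimed:
  "wf_fm V {False} p \<Longrightarrow> sat D (jfn s t) (jrl s t) e p = sat D (jfn s s) (jrl s s) e p"
  by (rule sat_symbol_cong[where V = V and ps = "{False}"]) (auto simp: jfn_def jrl_def)

lemma sat2_unprimed: "wf_fm V {False} p \<Longrightarrow> sat2 D s t p \<longleftrightarrow> sat1 D s p"
  unfolding sat1_def sat2_def by (simp only: sat_unprimed[of V p D s t])

lemma sat_prime: "sat D (jfn s t) (jrl s t) e (prime p) = sat D (jfn t t) (jrl t t) e p"
proof -
  have "(\<lambda>a. jfn s t ((\<lambda>(n, p). (n, True)) a)) = jfn t t"
    "(\<lambda>a. jrl s t ((\<lambda>(n, p). (n, True)) a)) = jrl t t"
    by (auto simp: jfn_def jrl_def)
  then show ?thesis by (simp add: prime_def sat_ren)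
qed

lemma sat2_prime: "sat2 D s t (prime p) \<longleftrightarrow> sat1 D t p"
  by (simp add: sat1_def sat2_def sat_prime)

lemma sat2_inv: "sat2 D s t (inv p) \<longleftrightarrow> sat2 D t s p"
proof -
  have "(\<lambda>a. jfn s t ((\<lambda>(n, p). (n, \<not> p)) a)) = jfn t s"
    "(\<lambda>a. jrl s t ((\<lambda>(n, p). (n, \<not> p)) a)) = jrl t s"
    by (auto simp: jfn_def jrl_def)
  then show ?thesis by (simp add: sat2_def inv_def sat_ren)
qed

lemma valid_imp_sat2:
  fixes D :: "'a set"
  assumes "valid TYPE('a) (Imp a b)" "D \<noteq> {}" "wf_state D s" "wf_state D t" "sat2 D s t a"
  shows "sat2 D s t b"
  using assms unfolding valid_def sat2_def by auto

definition agree_except :: "nat \<Rightarrow> 'a state \<Rightarrow> 'a state \<Rightarrow> bool" where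
  "agree_except w s s' \<longleftrightarrow> (\<forall>n. n \<noteq> w \<longrightarrow> sfn s n = sfn s' n \<and> srl s n = srl s' n)"

lemma sat_agree_except:
  assumes "wf_fm V ps p" "V w = None" "agree_except w s s'" "agree_except w t t'"
  shows "sat D (jfn s t) (jrl s t) e p = sat D (jfn s' t') (jrl s' t') e p"
proof (rule sat_symbol_cong[OF assms(1)])
  fix n q
  assume "V n \<noteq> None"
  then have "n \<noteq> w" using assms(2) by auto
  then show "jfn s t (n, q) = jfn s' t' (n, q) \<and> jrl s t (n, q) = jrl s' t' (n, q)"
    using assms(3,4) by (simp add: agree_except_def jfn_def jrl_def)
qed

lemma sat2_agree_except:
  "wf_fm V ps p \<Longrightarrow> V w = None \<Longrightarrow> agree_except w s s' \<Longrightarrow> agree_except w t t'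
   \<Longrightarrow> sat2 D s t p \<longleftrightarrow> sat2 D s' t' p"
  unfolding sat2_def by (simp only: sat_agree_except)

lemma sat1_agree_except:
  "wf_fm V ps p \<Longrightarrow> V w = None \<Longrightarrow> agree_except w s s' \<Longrightarrow> sat1 D s p \<longleftrightarrow> sat1 D s' p"
  unfolding sat1_def by (rule sat2_agree_except)

lemma sat2_closed:
  assumes "closed p" "d \<in> D"
  shows "sat2 D s t p \<longleftrightarrow> sat D (jfn s t) (jrl s t) (\<lambda>_. d) p"
proof -
  have "sat D (jfn s t) (jrl s t) e p = sat D (jfn s t) (jrl s t) (\<lambda>_. d) p" for e
    using assms(1) by (intro sat_env_cong) (simp add: closed_def)
  then show ?thesis using assms(2) unfolding sat2_def by auto
qed

lemma sat1_Neg: "closed p \<Longrightarrow> D \<noteq> {} \<Longrightarrow> sat1 D s (Neg p) \<longleftrightarrow> \<not> sat1 D s p"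
  unfolding sat1_def by (metis sat2_closed sat.simps(4) fv.simps(4) closed_def ex_in_conv)

fun error_trace :: "'a set \<Rightarrow> 'a state list \<Rightarrow> problem \<Rightarrow> bool" where
  "error_trace D ss (V, i, tr, b) \<longleftrightarrow>
     ss \<noteq> [] \<and> is_trace D tr ss \<and> sat1 D (hd ss) i \<and> sat1 D (last ss) b"

lemma safe_iff_no_error_trace:
  "safe TYPE('a) p \<longleftrightarrow> (\<forall>(D :: 'a set) ss. \<not> error_trace D ss p)"
  by (cases p) auto

lemma is_trace_take: "is_trace D tr ss \<Longrightarrow> is_trace D tr (take k ss)"
  unfolding is_trace_def by (auto dest: in_set_takeD)

lemma is_trace_rev: "is_trace D tr ss \<Longrightarrow> is_trace D (inv tr) (rev ss)"
  unfolding is_trace_def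
proof (intro conjI allI impI; elim conjE)
  fix k assume tr: "\<forall>i. Suc i < length ss \<longrightarrow> sat2 D (ss ! i) (ss ! Suc i) tr"
    and k: "Suc k < length (rev ss)"
  define j where "j = length ss - Suc (Suc k)"
  have "rev ss ! k = ss ! Suc j" "rev ss ! Suc k = ss ! j" "Suc j < length ss"
    using k by (simp_all add: rev_nth j_def Suc_diff_Suc)
  then show "sat2 D (rev ss ! k) (rev ss ! Suc k) (inv tr)"
    using tr by (simp add: sat2_inv)
qed auto

lemma is_trace_Conj:
  "is_trace D tr ss \<Longrightarrow> (\<And>k. Suc k < length ss \<Longrightarrow> sat2 D (ss ! k) (ss ! Suc k) a)
   \<Longrightarrow> is_trace D (Conj tr a) ss"
  by (simp add: is_trace_def sat2_Conj)

lemma is_trace_agree_except: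
  assumes "is_trace D tr ss" "wf_fm V UNIV tr" "V w = None"
    and "length ss' = length ss" "\<And>j. j < length ss \<Longrightarrow> agree_except w (ss ! j) (ss' ! j)"
    and "\<forall>s\<in>set ss'. wf_state D s"
  shows "is_trace D tr ss'"
  unfolding is_trace_def
proof (intro conjI allI impI)
  fix k assume k: "Suc k < length ss'"
  then have "sat2 D (ss ! k) (ss ! Suc k) tr"
    using assms(1,4) by (simp add: is_trace_def)
  then show "sat2 D (ss' ! k) (ss' ! Suc k) tr"
    using k assms(4) sat2_agree_except[OF assms(2,3) assms(5) assms(5)] by simp
qed (use assms in \<open>simp_all add: is_trace_def\<close>)

lemma invariant_along_trace:
  fixes D :: "'a set"
  assumes "wf_fm V {False} phi"
    and "valid TYPE('a) (Imp i phi)" "valid TYPE('a) (Imp (Conj phi tr) (prime phi))"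
    and "is_trace D tr ss" "ss \<noteq> []" "sat1 D (hd ss) i"
  shows "j < length ss \<Longrightarrow> sat1 D (ss ! j) phi"
proof (induction j)
  case 0
  have "D \<noteq> {}" "wf_state D (ss ! 0)" using assms(4) 0 by (simp_all add: is_trace_def)
  moreover have "sat2 D (ss ! 0) (ss ! 0) i" using assms(5,6) by (simp add: hd_conv_nth sat1_def)
  ultimately show ?case using valid_imp_sat2[OF assms(2)] by (simp add: sat1_def)
next
  case (Suc j)
  then have "sat2 D (ss ! j) (ss ! Suc j) (Conj phi tr)"
    using assms(1,4) by (simp add: sat2_Conj sat2_unprimed is_trace_def)
  moreover have "D \<noteq> {}" "wf_state D (ss ! j)" "wf_state D (ss ! Suc j)"
    using assms(4) Suc.prems by (simp_all add: is_trace_def)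
  ultimately show ?case using valid_imp_sat2[OF assms(3)] by (simp add: sat2_prime)
qed

lemma no_error_trace_Ind:
  fixes D :: "'a set"
  assumes "closed_over V phi"
    and "implies TYPE('a) i phi" "implies TYPE('a) (Conj phi tr) (prime phi)"
  shows "\<not> error_trace D ss (V, i, tr, Neg phi)"
proof
  assume "error_trace D ss (V, i, tr, Neg phi)"
  then have ss: "ss \<noteq> []" "is_trace D tr ss" "sat1 D (hd ss) i" "sat1 D (last ss) (Neg phi)"
    by simp_all
  have "sat1 D (last ss) phi"
    using invariant_along_trace[of V phi i tr D ss "length ss - 1"] assms ss
    by (simp add: closed_over_def implies_def last_conv_nth)
  with ss(4) show False
    using ss(2) assms(1) by (simp add: sat1_Neg closed_over_def is_trace_def)
qed

lemma error_trace_Cons: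
  fixes D :: "'a set"
  assumes "implies TYPE('a) phi (Neg b)" "error_trace D ss (V, i, tr, b)"
  shows "error_trace D ss (V, i, tr, Neg phi)"
proof -
  have "D \<noteq> {}" "wf_state D (last ss)" "sat2 D (last ss) (last ss) b"
    using assms(2) by (auto simp: is_trace_def sat1_def)
  then have "sat2 D (last ss) (last ss) (Imp phi (Neg b))"
    using assms(1) by (simp add: implies_def valid_def)
  with \<open>sat2 D (last ss) (last ss) b\<close> have "sat1 D (last ss) (Neg phi)"
    by (auto simp: sat1_def sat2_def)
  then show ?thesis using assms(2) by simp
qed

lemma error_trace_Rev:
  "error_trace D ss (V, i, tr, b) \<Longrightarrow> error_trace D (rev ss) (V, b, inv tr, i)"
  by (simp add: is_trace_rev hd_rev last_rev)

lemma error_trace_Inc: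
  assumes "closed_over V phi" "error_trace D ss (V, i, tr, b)"
  shows "(\<exists>j. error_trace D (take (Suc j) ss) (V, i, tr, Neg phi))
    \<or> error_trace D ss (V, Conj i phi, Conj tr (Conj phi (prime phi)), Conj b phi)"
proof (cases "\<forall>j < length ss. sat1 D (ss ! j) phi")
  case True
  have "wf_fm V {False} phi" using assms(1) by (simp add: closed_over_def)
  then have "is_trace D (Conj tr (Conj phi (prime phi))) ss"
    using assms(2) True by (intro is_trace_Conj) (simp_all add: sat2_Conj sat2_prime sat2_unprimed)
  moreover have "sat1 D (hd ss) phi" "sat1 D (last ss) phi"
    using assms(2) True by (simp_all add: hd_conv_nth last_conv_nth)
  ultimately show ?thesis
    using assms(2) by (simp add: sat1_Conj)
next
  case False
  then obtain j where "j < length ss" "\<not> sat1 D (ss ! j) phi" by blast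
  moreover have "closed phi" "D \<noteq> {}"
    using assms by (simp_all add: closed_over_def is_trace_def)
  moreover have "hd (take (Suc j) ss) = hd ss" "is_trace D tr (take (Suc j) ss)"
    using assms(2) by (simp_all add: is_trace_take)
  ultimately have "error_trace D (take (Suc j) ss) (V, i, tr, Neg phi)"
    using assms(2) by (simp add: sat1_Neg take_Suc_conv_app_nth)
  then show ?thesis by blast
qed

(* phi(d) holds in s: the constant environment d suffices, as phi has at most the free
   variable x wherever this is used. *)
definition holds_at :: "'a set \<Rightarrow> 'a state \<Rightarrow> fm \<Rightarrow> 'a \<Rightarrow> bool" where
  "holds_at D s phi d \<longleftrightarrow> sat D (jfn s s) (jrl s s) (\<lambda>_. d) phi"

lemma sat_holds_at:
  assumes "wf_fm V {False} phi" "fv phi \<subseteq> {x}" "V w = None" "agree_except w s s'"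
  shows "sat D (jfn s' t) (jrl s' t) (e(x := d)) phi \<longleftrightarrow> holds_at D s phi d"
proof -
  have "sat D (jfn s' t) (jrl s' t) (e(x := d)) phi = sat D (jfn s' s') (jrl s' s') (e(x := d)) phi"
    by (rule sat_unprimed[OF assms(1)])
  also have "\<dots> = sat D (jfn s s) (jrl s s) (e(x := d)) phi"
    by (rule sat_agree_except[OF assms(1,3,4,4), symmetric])
  also have "\<dots> = holds_at D s phi d"
    unfolding holds_at_def by (rule sat_env_cong) (use assms(2) in auto)
  finally show ?thesis .
qed

lemma error_trace_proph_w:
  fixes D :: "'a set"
  assumes "wf_problem (V, i, tr, b)" "V w = None" "wf_fm V {False} phi" "fv phi \<subseteq> {x}"
    and "error_trace D ss (V, i, tr, b)"
    and "d \<in> D" "\<forall>s\<in>set ss. holds_at D s phi d"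
  shows "\<exists>ss'. error_trace D ss' (proph_w (V, i, tr, b) x phi w)"
proof -
  define upd where "upd s = s\<lparr>sfn := (sfn s)(w := \<lambda>_. d)\<rparr>" for s :: "'a state"
  define pw where "pw = subst x (Fn (w, False) []) phi"
  have agree: "agree_except w s (upd s)" for s
    by (simp add: agree_except_def upd_def)
  have "sat D (jfn (upd s) t) (jrl (upd s) t) e pw \<longleftrightarrow> holds_at D s phi d" for s t e
  proof -
    have "teval (jfn (upd s) t) e (Fn (w, False) []) = d"
      by (simp add: jfn_def upd_def)
    then show ?thesis
      unfolding pw_def by (simp add: sat_subst sat_holds_at[OF assms(3,4,2) agree])
  qed
  then have pw: "sat2 D (upd s) t pw \<longleftrightarrow> holds_at D s phi d" for s t
    using assms(6) by (auto simp: sat2_def all_env_const)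
  have wf: "wf_fm V {False} i" "wf_fm V UNIV tr" "wf_fm V {False} b"
    using assms(1) by (simp_all add: closed_over_def closed_over2_def)
  have ss: "ss \<noteq> []" "is_trace D tr ss" "sat1 D (hd ss) i" "sat1 D (last ss) b"
    using assms(5) by simp_all
  have "\<forall>s\<in>set (map upd ss). wf_state D s"
    using ss(2) assms(6) by (auto simp: is_trace_def wf_state_def upd_def)
  then have "is_trace D tr (map upd ss)"
    using agree by (intro is_trace_agree_except[OF ss(2) wf(2) assms(2)]) simp_all
  moreover have "sat2 D (upd s) (upd t) (Eq (Fn (w, True) []) (Fn (w, False) []))" for s t
    by (simp add: sat2_def jfn_def upd_def)
  ultimately have
    "is_trace D (Conj pw (Conj tr (Conj (Eq (Fn (w, True) []) (Fn (w, False) [])) (prime pw))))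
      (map upd ss)"
    using assms(7) by (simp add: is_trace_def sat2_Conj sat2_prime sat1_def pw)
  moreover have "sat1 D (upd (hd ss)) (Conj i pw)" "sat1 D (upd (last ss)) (Conj b pw)"
    using ss assms(7) pw[of _ "upd _"]
      sat1_agree_except[OF wf(1) assms(2) agree, symmetric]
      sat1_agree_except[OF wf(3) assms(2) agree, symmetric]
    by (simp_all add: sat1_Conj sat1_def[of D _ pw])
  ultimately have "error_trace D (map upd ss) (proph_w (V, i, tr, b) x phi w)"
    using ss(1) by (simp add: pw_def hd_map last_map Let_def)
  then show ?thesis ..
qed

lemma error_trace_proph_sound:
  fixes D :: "'a set"
  assumes "wf_problem (V, i, tr, b)" "V m = None" "wf_fm V {False} phi" "fv phi \<subseteq> {x}"
    and "error_trace D ss (V, i, tr, b)"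
    and "\<forall>d\<in>D. \<exists>s\<in>set ss. \<not> holds_at D s phi d"
  shows "\<exists>ss'. error_trace D ss' (proph_sound (V, i, tr, b) x phi m)"
proof -
  define n where "n = length ss"
  define M where "M j d \<longleftrightarrow> (\<forall>l\<le>j. holds_at D (ss ! l) phi d)" for j d
  define upd where "upd j = (ss ! j)\<lparr>srl := (srl (ss ! j))(m := \<lambda>as. M j (hd as))\<rparr>" for j
  have agree: "agree_except m (ss ! j) (upd j)" for j
    by (simp add: agree_except_def upd_def)
  have phi: "sat D (jfn (upd j) t) (jrl (upd j) t) (e(x := d)) phi \<longleftrightarrow> holds_at D (ss ! j) phi d"
    for j t e d
    by (rule sat_holds_at[OF assms(3,4,2) agree])
  have phi': "sat D (jfn s (upd j)) (jrl s (upd j)) (e(x := d)) (prime phi)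
      \<longleftrightarrow> holds_at D (ss ! j) phi d" for s j e d
    by (simp only: sat_prime phi)
  have m: "jrl (upd j) t (m, False) = (\<lambda>as. M j (hd as))"
    "jrl s (upd j) (m, True) = (\<lambda>as. M j (hd as))" for s t j
    by (simp_all add: jrl_def upd_def)
  have wf: "wf_fm V {False} i" "wf_fm V UNIV tr" "wf_fm V {False} b"
    using assms(1) by (simp_all add: closed_over_def closed_over2_def)
  have ss: "ss \<noteq> []" "is_trace D tr ss" "sat1 D (hd ss) i" "sat1 D (last ss) b"
    using assms(5) by simp_all
  have D: "D \<noteq> {}" using ss(2) by (simp add: is_trace_def)
  define ss' where "ss' = map upd [0..<n]"
  have "\<forall>s\<in>set ss'. wf_state D s"
    using ss(2) by (auto simp: ss'_def n_def is_trace_def wf_state_def upd_def)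
  then have "is_trace D tr ss'"
    using agree
    by (intro is_trace_agree_except[OF ss(2) wf(2) assms(2)]) (simp_all add: ss'_def n_def)
  moreover have "M (Suc j) d \<longleftrightarrow> M j d \<and> holds_at D (ss ! Suc j) phi d" for j d
    by (auto simp: M_def le_Suc_eq)
  ultimately have trace: "is_trace D (Conj tr (All x (Imp (Conj (Pr (m, False) [Var x])
      (Conj phi (prime phi))) (Pr (m, True) [Var x])))) ss'"
    by (intro is_trace_Conj) (simp_all add: ss'_def n_def sat2_def phi phi' m all_env_const[OF D])
  have first: "sat1 D (ss' ! 0) (Conj i (All x (Imp phi (Pr (m, False) [Var x]))))"
    using ss sat1_agree_except[OF wf(1) assms(2) agree, symmetric]
    by (simp add: ss'_def n_def sat1_Conj sat1_def[of D _ "All _ _"] sat2_def phi m M_def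
        all_env_const[OF D] hd_conv_nth)
  have "\<not> M (n - 1) d" if d: "d \<in> D" for d
  proof -
    obtain l where "l < n" "\<not> holds_at D (ss ! l) phi d"
      using assms(6) d unfolding n_def by (metis in_set_conv_nth)
    then show ?thesis unfolding M_def by (auto intro!: exI[of _ l])
  qed
  then have last: "sat1 D (ss' ! (n - 1)) (Conj b (All x (Imp phi (Neg (Pr (m, False) [Var x])))))"
    using ss sat1_agree_except[OF wf(3) assms(2) agree, symmetric]
    by (simp add: ss'_def n_def sat1_Conj sat1_def[of D _ "All _ _"] sat2_def phi m
        all_env_const[OF D] last_conv_nth)
  have "ss' \<noteq> []" "hd ss' = ss' ! 0" "last ss' = ss' ! (n - 1)"
    using ss(1) by (simp_all add: ss'_def n_def hd_conv_nth last_conv_nth)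
  then have "error_trace D ss' (proph_sound (V, i, tr, b) x phi m)"
    using trace first last by simp
  then show ?thesis ..
qed

lemma error_trace_Proph:
  fixes D :: "'a set"
  assumes "wf_problem (V, i, tr, b)" "V w = None" "V m = None"
    and "wf_fm V {False} phi" "fv phi \<subseteq> {x}" "error_trace D ss (V, i, tr, b)"
  shows "\<exists>ss'. error_trace D ss' (proph_sound (V, i, tr, b) x phi m)
    \<or> error_trace D ss' (proph_w (V, i, tr, b) x phi w)"
proof (cases "\<exists>d\<in>D. \<forall>s\<in>set ss. holds_at D s phi d")
  case True
  then show ?thesis using error_trace_proph_w[OF assms(1,2,4,5,6)] by blast
next
  case False
  then show ?thesis using error_trace_proph_sound[OF assms(1,3,4,5,6)] by blast
qed

lemma rule_inst_safe:
  assumes "wf_problem p" "rule_inst TYPE('a) p cs" "\<forall>c\<in>set cs. safe TYPE('a) c"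
  shows "safe TYPE('a) p"
  unfolding safe_iff_no_error_trace
proof (intro allI notI)
  fix D :: "'a set" and ss
  assume err: "error_trace D ss p"
  obtain V i tr b where p: "p = (V, i, tr, b)" by (cases p)
  have no_err: "\<not> error_trace D ss' c" if "c \<in> set cs" for c ss'
    using assms(3) that safe_iff_no_error_trace by blast
  from assms(2)[unfolded p rule_inst.simps] show False
  proof (elim disjE exE conjE)
    fix phi
    assume "closed_over V phi" "cs = []" "b = Neg phi"
      "implies TYPE('a) i phi" "implies TYPE('a) (Conj phi tr) (prime phi)"
    then show False using no_error_trace_Ind err p by blast
  next
    fix phi
    assume "cs = [(V, i, tr, Neg phi)]" "implies TYPE('a) phi (Neg b)"
    then show False
      using error_trace_Cons[of phi b D ss V i tr] err p no_err[of "(V, i, tr, Neg phi)" ss] by simp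
  next
    fix phi
    assume "closed_over V phi" "cs = [(V, i, tr, Neg phi),
      (V, Conj i phi, Conj tr (Conj phi (prime phi)), Conj b phi)]"
    then show False using error_trace_Inc err p no_err by (metis list.set_intros)
  next
    assume "cs = [(V, b, inv tr, i)]"
    then show False
      using error_trace_Rev[of D ss V i tr b] err p no_err[of "(V, b, inv tr, i)" "rev ss"] by simp
  next
    fix w m x phi
    assume "V w = None" "V m = None" "wf_fm V {False} phi" "fv phi \<subseteq> {x}"
      "cs = [proph_sound (V, i, tr, b) x phi m, proph_w (V, i, tr, b) x phi w]"
    then show False using error_trace_Proph assms(1) err p no_err by (metis list.set_intros)
  qed
qed

lemma is_proof_safe: "is_proof TYPE('a) P \<Longrightarrow> safe TYPE('a) (root P)"
proof (induction P)
  case (Node p cs)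
  then show ?case using rule_inst_safe[of p "map root cs"] by auto
qed

theorem theorem5p4:
  fixes Pi :: problem
  assumes "wf_problem Pi"
    and "has_fbpi_proof TYPE('a) Pi"
  shows "safe TYPE('a) Pi"
  using assms(2) is_proof_safe unfolding has_fbpi_proof_def by blast

end
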